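(* Let $G$ be a finite graph with vertex weights $q_v$ and vertex momenta $p_v\in\mathbb R^d$, and let $\mathcal U_G,\mathcal V_G$ be its generalized Symanzik polynomials. For every edge $e$ of $G$ that is not a self-loop, $$\mathcal U_G=\alpha_e\,\mathcal U_{G-e}+\mathcal U_{G/e},\qquad \mathcal V_G=\alpha_e\,\mathcal V_{G-e}+\mathcal V_{G/e}.$$ Moreover, if every edge of $G$ is a self-loop, then $\mathcal U_G=\prod_e\alpha_e\prod_vq_v$ and $\mathcal V_G=\prod_e\alpha_e\sum_vp_v^2\prod_{v'\neq v}q_{v'}$.
   Context: Incidence numbers: $\epsilon_{ev}=+1$ if $e$ is not a self-loop and starts at $v$, $-1$ if not a self-loop and ends at $v$, $0$ otherwise. $Q_G$ is the $(|E|+|V|)$-square matrix indexed by $E\sqcup V$ with $(Q_G)_{ee'}=\alpha_e\delta_{ee'}$, $(Q_G)_{vv'}=q_v\delta_{vv'}$, $(Q_G)_{ev}=(Q_G)_{ve}=-i\epsilon_{ev}$; $\mathcal U_G=\det Q_G$ and $\mathcal V_G=\mathcal U_G\sum_{v,v'}p_v\cdot p_{v'}(Q_G^{-1})_{vv'}$ (for positive $\alpha,q$; both are polynomials). $G-e$ is $G$ with edge $e$ removed (vertices, weights and momenta unchanged). For $e$ joining distinct vertices $v_1,v_2$, $G/e$ is obtained by removing $e$ and identifying $v_1,v_2$ into one vertex $v_{12}$ carrying all remaining edges of $v_1,v_2$ (other edges between $v_1,v_2$ become self-loops), with weight $q_{v_{12}}=q_{v_1}+q_{v_2}$ and momentum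 $p_{v_{12}}=p_{v_1}+p_{v_2}$. *)

theory Defs
  imports "HOL-Analysis.Analysis"
begin

text \<open>A finite graph is given by a finite edge set E, a finite vertex set V and
  endpoint maps src, tgt (edge e runs from src e to tgt e); self-loops have
  src e = tgt e.\<close>

definition incid :: "('e \<Rightarrow> 'v) \<Rightarrow> ('e \<Rightarrow> 'v) \<Rightarrow> 'e \<Rightarrow> 'v \<Rightarrow> complex" where
  "incid src tgt e v =
     (if src e = tgt e then 0
      else if src e = v then 1
      else if tgt e = v then -1 else 0)"

definition QG :: "('e \<Rightarrow> 'v) \<Rightarrow> ('e \<Rightarrow> 'v) \<Rightarrow> ('e \<Rightarrow> real) \<Rightarrow> ('v \<Rightarrow> real)
                  \<Rightarrow> ('e + 'v) \<Rightarrow> ('e + 'v) \<Rightarrow> complex" where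
  "QG src tgt \<alpha> q x y =
     (case (x, y) of
        (Inl e, Inl e') \<Rightarrow> (if e = e' then complex_of_real (\<alpha> e) else 0)
      | (Inr v, Inr v') \<Rightarrow> (if v = v' then complex_of_real (q v) else 0)
      | (Inl e, Inr v) \<Rightarrow> - \<i> * incid src tgt e v
      | (Inr v, Inl e) \<Rightarrow> - \<i> * incid src tgt e v)"

definition det_on :: "'i set \<Rightarrow> ('i \<Rightarrow> 'i \<Rightarrow> complex) \<Rightarrow> complex" where
  "det_on I M = (\<Sum>\<sigma> \<in> {\<sigma>. \<sigma> permutes I}. of_int (sign \<sigma>) * (\<Prod>i\<in>I. M i (\<sigma> i)))"

text \<open>Adjugate entry: adj(M)_{ij} = det of M with column i replaced by the unit
  vector e_j (Cramer's rule), so that adj(M) = det(M) * M^{-1} when M is invertible.\<close>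
definition adj_on :: "'i set \<Rightarrow> ('i \<Rightarrow> 'i \<Rightarrow> complex) \<Rightarrow> 'i \<Rightarrow> 'i \<Rightarrow> complex" where
  "adj_on I M i j = det_on I (\<lambda>r c. if c = i then (if r = j then 1 else 0) else M r c)"

definition UG :: "'e set \<Rightarrow> 'v set \<Rightarrow> ('e \<Rightarrow> 'v) \<Rightarrow> ('e \<Rightarrow> 'v) \<Rightarrow> ('e \<Rightarrow> real)
                  \<Rightarrow> ('v \<Rightarrow> real) \<Rightarrow> complex" where
  "UG E V src tgt \<alpha> q = det_on (Inl ` E \<union> Inr ` V) (QG src tgt \<alpha> q)"

text \<open>V_G = U_G * sum p_v.p_v' (Q_G^{-1})_{vv'}, written polynomially via the adjugate.\<close>
definition VG :: "'e set \<Rightarrow> 'v set \<Rightarrow> ('e \<Rightarrow> 'v) \<Rightarrow> ('e \<Rightarrow> 'v) \<Rightarrow> ('e \<Rightarrow> real)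
                  \<Rightarrow> ('v \<Rightarrow> real) \<Rightarrow> ('v \<Rightarrow> real^'d) \<Rightarrow> complex" where
  "VG E V src tgt \<alpha> q p =
     (\<Sum>v\<in>V. \<Sum>v'\<in>V. complex_of_real (inner (p v) (p v'))
                      * adj_on (Inl ` E \<union> Inr ` V) (QG src tgt \<alpha> q) (Inr v) (Inr v'))"

text \<open>Contraction of edge e (with src e \<noteq> tgt e): vertex tgt e is identified with
  src e; the merged vertex is represented by src e.\<close>
definition merge :: "('e \<Rightarrow> 'v) \<Rightarrow> ('e \<Rightarrow> 'v) \<Rightarrow> 'e \<Rightarrow> 'v \<Rightarrow> 'v" where
  "merge src tgt e x = (if x = tgt e then src e else x)"

definition contr_V :: "'v set \<Rightarrow> ('e \<Rightarrow> 'v) \<Rightarrow> ('e \<Rightarrow> 'v) \<Rightarrow> 'e \<Rightarrow> 'v set" where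
  "contr_V V src tgt e = V - {tgt e}"

definition contr_src :: "('e \<Rightarrow> 'v) \<Rightarrow> ('e \<Rightarrow> 'v) \<Rightarrow> 'e \<Rightarrow> 'e \<Rightarrow> 'v" where
  "contr_src src tgt e = merge src tgt e \<circ> src"

definition contr_tgt :: "('e \<Rightarrow> 'v) \<Rightarrow> ('e \<Rightarrow> 'v) \<Rightarrow> 'e \<Rightarrow> 'e \<Rightarrow> 'v" where
  "contr_tgt src tgt e = merge src tgt e \<circ> tgt"

definition contr_q :: "('v \<Rightarrow> real) \<Rightarrow> ('e \<Rightarrow> 'v) \<Rightarrow> ('e \<Rightarrow> 'v) \<Rightarrow> 'e \<Rightarrow> 'v \<Rightarrow> real" where
  "contr_q q src tgt e = q(src e := q (src e) + q (tgt e))"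

definition contr_p :: "('v \<Rightarrow> real^'d) \<Rightarrow> ('e \<Rightarrow> 'v) \<Rightarrow> ('e \<Rightarrow> 'v) \<Rightarrow> 'e \<Rightarrow> 'v \<Rightarrow> real^'d" where
  "contr_p p src tgt e = p(src e := p (src e) + p (tgt e))"

end

theory Submission
  imports Defs
begin

(* 1. Basic algebra of det_on: congruence, transposition, column permutations,
      multilinearity and alternation in the rows, elementary row/column
      operations, expansion along a row with a single nonzero entry.
   2. An abstract deletion-contraction identity: if row and column e of M look
      like those of a non-loop edge e joining s and t, then det M equals
      M e e * det (M without e) plus the determinant of the matrix obtained by
      deleting e and merging index t into s ("contract_mat").
   3. Bordering: the quadratic form sum c_i b_j adj(M)_ij is minus the
      determinant of M bordered by the row c and the column b; so V_G is a sum
      of determinants and step 2 applies to it as well.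
   4. For the graph matrix Q_G, merging the rows/columns of the two endpoints of
      e is exactly Q_{G/e}; this gives the recursions for U_G and V_G.
   5. If all edges are self-loops, Q_G is diagonal and both polynomials are
      computed directly. *)

lemma det_on_cong:
  assumes "\<And>r c. r \<in> I \<Longrightarrow> c \<in> I \<Longrightarrow> M r c = N r c"
  shows "det_on I M = det_on I N"
proof -
  have "(\<Prod>i\<in>I. M i (\<sigma> i)) = (\<Prod>i\<in>I. N i (\<sigma> i))" if "\<sigma> permutes I" for \<sigma>
    using assms permutes_in_image[OF that] by (intro prod.cong) auto
  then show ?thesis unfolding det_on_def by (intro sum.cong) auto
qed

(* Transposition invariance, via the bijection sigma |-> inv sigma on permutations. *)
lemma det_on_transpose:
  assumes "finite I"
  shows "det_on I (\<lambda>r c. M c r) = det_on I M"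
proof -
  have "det_on I (\<lambda>r c. M c r) = (\<Sum>\<sigma>\<in>{\<sigma>. \<sigma> permutes I}. of_int (sign (inv \<sigma>)) * (\<Prod>i\<in>I. M (inv \<sigma> i) i))"
    unfolding det_on_def by (subst sum_permutations_inverse) simp
  also have "\<dots> = det_on I M"
    unfolding det_on_def
  proof (intro sum.cong refl)
    fix \<sigma> assume "\<sigma> \<in> {\<sigma>. \<sigma> permutes I}"
    then have p: "\<sigma> permutes I" by simp
    have "sign (inv \<sigma>) = sign \<sigma>"
      using sign_inverse permutes_imp_permutation[OF assms p] by blast
    moreover have "(\<Prod>i\<in>I. M (inv \<sigma> i) i) = (\<Prod>i\<in>I. M i (\<sigma> i))"
      using prod.permute[OF p, of "\<lambda>i. M (inv \<sigma> i) i"] permutes_inverses[OF p]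
      by (simp add: o_def)
    ultimately show "of_int (sign (inv \<sigma>)) * (\<Prod>i\<in>I. M (inv \<sigma> i) i) = of_int (sign \<sigma>) * (\<Prod>i\<in>I. M i (\<sigma> i))"
      by simp
  qed
  finally show ?thesis .
qed

lemma det_on_perm_cols:
  assumes "finite I" "\<tau> permutes I"
  shows "det_on I (\<lambda>r c. M r (\<tau> c)) = of_int (sign \<tau>) * det_on I M"
proof -
  have it: "inv \<tau> permutes I" using permutes_inv[OF assms(2)] .
  have "det_on I (\<lambda>r c. M r (\<tau> c)) = (\<Sum>\<rho>\<in>{\<sigma>. \<sigma> permutes I}. of_int (sign (inv \<tau> \<circ> \<rho>)) * (\<Prod>i\<in>I. M i (\<tau> ((inv \<tau> \<circ> \<rho>) i))))"
    unfolding det_on_def by (subst setum_permutations_compose_left[OF it]) simp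
  also have "\<dots> = (\<Sum>\<rho>\<in>{\<sigma>. \<sigma> permutes I}. of_int (sign \<tau>) * (of_int (sign \<rho>) * (\<Prod>i\<in>I. M i (\<rho> i))))"
  proof (intro sum.cong refl)
    fix \<rho> assume "\<rho> \<in> {\<sigma>. \<sigma> permutes I}"
    then have p: "\<rho> permutes I" by simp
    have "sign (inv \<tau> \<circ> \<rho>) = sign \<tau> * sign \<rho>"
      using sign_compose[OF permutes_imp_permutation[OF assms(1) it] permutes_imp_permutation[OF assms(1) p]]
        sign_inverse[OF permutes_imp_permutation[OF assms]] by simp
    moreover have "(\<Prod>i\<in>I. M i (\<tau> ((inv \<tau> \<circ> \<rho>) i))) = (\<Prod>i\<in>I. M i (\<rho> i))"
      using permutes_inverses[OF assms(2)] by simp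
    ultimately show "of_int (sign (inv \<tau> \<circ> \<rho>)) * (\<Prod>i\<in>I. M i (\<tau> ((inv \<tau> \<circ> \<rho>) i))) = of_int (sign \<tau>) * (of_int (sign \<rho>) * (\<Prod>i\<in>I. M i (\<rho> i)))"
      by simp
  qed
  also have "\<dots> = of_int (sign \<tau>) * det_on I M"
    unfolding det_on_def by (simp add: sum_distrib_left)
  finally show ?thesis .
qed

(* Alternation: two equal columns give determinant zero (swap them). *)
lemma det_on_equal_cols:
  assumes "finite I" "a \<in> I" "b \<in> I" "a \<noteq> b" "\<And>r. M r a = M r b"
  shows "det_on I M = 0"
proof -
  have "det_on I (\<lambda>r c. M r (Transposition.transpose a b c)) = - det_on I M"
    using det_on_perm_cols[OF assms(1) permutes_swap_id[OF assms(2,3)]] assms(4)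
    by (simp add: sign_swap_id)
  moreover have "(\<lambda>r c. M r (Transposition.transpose a b c)) = M"
    using assms(5) by (auto simp: fun_eq_iff Transposition.transpose_def)
  ultimately show ?thesis by simp
qed

lemma det_on_equal_rows:
  assumes "finite I" "a \<in> I" "b \<in> I" "a \<noteq> b" "\<And>c. M a c = M b c"
  shows "det_on I M = 0"
proof -
  have "det_on I (\<lambda>r c. M c r) = 0"
    using det_on_equal_cols[of I a b "\<lambda>r c. M c r"] assms by auto
  then show ?thesis by (metis det_on_transpose[OF assms(1), of M])
qed

lemma det_on_row_lin:
  assumes "finite I" "i \<in> I"
    and "\<And>c. M i c = k * A i c + B i c"
    and "\<And>r c. r \<noteq> i \<Longrightarrow> A r c = M r c"
    and "\<And>r c. r \<noteq> i \<Longrightarrow> B r c = M r c"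
  shows "det_on I M = k * det_on I A + det_on I B"
proof -
  have "of_int (sign \<sigma>) * (\<Prod>j\<in>I. M j (\<sigma> j)) =
        k * (of_int (sign \<sigma>) * (\<Prod>j\<in>I. A j (\<sigma> j))) + of_int (sign \<sigma>) * (\<Prod>j\<in>I. B j (\<sigma> j))" for \<sigma>
  proof -
    have eA: "(\<Prod>j\<in>I - {i}. A j (\<sigma> j)) = (\<Prod>j\<in>I - {i}. M j (\<sigma> j))"
      using assms(4) by (intro prod.cong) auto
    have eB: "(\<Prod>j\<in>I - {i}. B j (\<sigma> j)) = (\<Prod>j\<in>I - {i}. M j (\<sigma> j))"
      using assms(5) by (intro prod.cong) auto
    show ?thesis
      using prod.remove[OF assms(1,2), of "\<lambda>j. M j (\<sigma> j)"] prod.remove[OF assms(1,2), of "\<lambda>j. A j (\<sigma> j)"]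
        prod.remove[OF assms(1,2), of "\<lambda>j. B j (\<sigma> j)"] eA eB assms(3)[of "\<sigma> i"]
      by (simp add: algebra_simps)
  qed
  then show ?thesis unfolding det_on_def by (simp add: sum.distrib sum_distrib_left)
qed

lemma det_on_row_sum:
  assumes "finite I" "i \<in> I" "finite K"
    and "\<And>c. c \<in> I \<Longrightarrow> M i c = (\<Sum>k\<in>K. w k * A k i c)"
    and "\<And>k r c. r \<noteq> i \<Longrightarrow> A k r c = M r c"
  shows "det_on I M = (\<Sum>k\<in>K. w k * det_on I (A k))"
proof -
  have X: "of_int (sign \<sigma>) * (\<Prod>j\<in>I. M j (\<sigma> j)) =
        (\<Sum>k\<in>K. w k * (of_int (sign \<sigma>) * (\<Prod>j\<in>I. A k j (\<sigma> j))))" if p: "\<sigma> permutes I" for \<sigma>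
  proof -
    have eA: "(\<Prod>j\<in>I. A k j (\<sigma> j)) = A k i (\<sigma> i) * (\<Prod>j\<in>I - {i}. M j (\<sigma> j))" for k
    proof -
      have "(\<Prod>j\<in>I - {i}. A k j (\<sigma> j)) = (\<Prod>j\<in>I - {i}. M j (\<sigma> j))"
        using assms(5) by (intro prod.cong) auto
      then show ?thesis using prod.remove[OF assms(1,2), of "\<lambda>j. A k j (\<sigma> j)"] by simp
    qed
    have "(\<Sum>k\<in>K. w k * (of_int (sign \<sigma>) * (\<Prod>j\<in>I. A k j (\<sigma> j))))
        = (\<Sum>k\<in>K. w k * (of_int (sign \<sigma>) * (A k i (\<sigma> i) * (\<Prod>j\<in>I - {i}. M j (\<sigma> j)))))"
      by (simp only: eA)
    also have "\<dots> = of_int (sign \<sigma>) * ((\<Sum>k\<in>K. w k * A k i (\<sigma> i)) * (\<Prod>j\<in>I - {i}. M j (\<sigma> j)))"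
      by (simp add: sum_distrib_left sum_distrib_right algebra_simps)
    also have "\<dots> = of_int (sign \<sigma>) * (\<Prod>j\<in>I. M j (\<sigma> j))"
      using prod.remove[OF assms(1,2), of "\<lambda>j. M j (\<sigma> j)"] assms(4)[OF permutes_in_image[OF p, THEN iffD2, OF assms(2)]]
      by simp
    finally show ?thesis by simp
  qed
  have "det_on I M = (\<Sum>\<sigma>\<in>{\<sigma>. \<sigma> permutes I}. \<Sum>k\<in>K. w k * (of_int (sign \<sigma>) * (\<Prod>j\<in>I. A k j (\<sigma> j))))"
    unfolding det_on_def by (intro sum.cong refl) (use X in auto)
  also have "\<dots> = (\<Sum>k\<in>K. w k * det_on I (A k))"
    unfolding det_on_def by (subst sum.swap) (simp add: sum_distrib_left)
  finally show ?thesis .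
qed

lemma permutes_minus_iff:
  "\<sigma> permutes (I - {i}) \<longleftrightarrow> \<sigma> permutes I \<and> \<sigma> i = i"
proof
  assume "\<sigma> permutes (I - {i})"
  then show "\<sigma> permutes I \<and> \<sigma> i = i"
    using permutes_subset[of \<sigma> "I - {i}" I] permutes_not_in[of \<sigma> "I - {i}" i] by blast
next
  assume a: "\<sigma> permutes I \<and> \<sigma> i = i"
  have "\<forall>x. x \<notin> I - {i} \<longrightarrow> \<sigma> x = x" using a permutes_not_in[of \<sigma> I] by blast
  moreover have "\<forall>y. \<exists>!x. \<sigma> x = y" using a unfolding permutes_def by blast
  ultimately show "\<sigma> permutes (I - {i})" unfolding permutes_def by blast
qed

lemma det_on_single_row:
  assumes "finite I" "i \<in> I" "\<And>c. c \<in> I \<Longrightarrow> c \<noteq> i \<Longrightarrow> M i c = 0"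
  shows "det_on I M = M i i * det_on (I - {i}) M"
proof -
  let ?f = "\<lambda>\<sigma>. of_int (sign \<sigma>) * (\<Prod>j\<in>I. M j (\<sigma> j))"
  have fin: "finite {\<sigma>. \<sigma> permutes I}" using finite_permutations[OF assms(1)] .
  have "det_on I M = (\<Sum>\<sigma>\<in>{\<sigma>. \<sigma> permutes I} \<inter> {\<sigma>. \<sigma> i = i}. ?f \<sigma>) + (\<Sum>\<sigma>\<in>{\<sigma>. \<sigma> permutes I} - {\<sigma>. \<sigma> i = i}. ?f \<sigma>)"
    unfolding det_on_def by (rule sum.Int_Diff[OF fin])
  also have "(\<Sum>\<sigma>\<in>{\<sigma>. \<sigma> permutes I} - {\<sigma>. \<sigma> i = i}. ?f \<sigma>) = 0"
  proof (intro sum.neutral ballI)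
    fix \<sigma> assume "\<sigma> \<in> {\<sigma>. \<sigma> permutes I} - {\<sigma>. \<sigma> i = i}"
    then have p: "\<sigma> permutes I" and ne: "\<sigma> i \<noteq> i" by auto
    have "\<sigma> i \<in> I" using permutes_in_image[OF p] assms(2) by simp
    then have "M i (\<sigma> i) = 0" using assms(3) ne by simp
    then have "(\<Prod>j\<in>I. M j (\<sigma> j)) = 0" using assms(1,2) by (intro prod_zero) auto
    then show "?f \<sigma> = 0" by simp
  qed
  also have "{\<sigma>. \<sigma> permutes I} \<inter> {\<sigma>. \<sigma> i = i} = {\<sigma>. \<sigma> permutes (I - {i})}"
    by (simp only: permutes_minus_iff) blast
  also have "(\<Sum>\<sigma>\<in>{\<sigma>. \<sigma> permutes (I - {i})}. ?f \<sigma>) = M i i * det_on (I - {i}) M"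
    unfolding det_on_def sum_distrib_left
  proof (intro sum.cong refl)
    fix \<sigma> assume "\<sigma> \<in> {\<sigma>. \<sigma> permutes (I - {i})}"
    then have "\<sigma> i = i" by (simp add: permutes_minus_iff)
    then show "?f \<sigma> = M i i * (of_int (sign \<sigma>) * (\<Prod>j\<in>I - {i}. M j (\<sigma> j)))"
      using prod.remove[OF assms(1,2), of "\<lambda>j. M j (\<sigma> j)"] by simp
  qed
  finally show ?thesis by simp
qed

lemma det_on_single_col:
  assumes "finite I" "i \<in> I" "\<And>r. r \<in> I \<Longrightarrow> r \<noteq> i \<Longrightarrow> M r i = 0"
  shows "det_on I M = M i i * det_on (I - {i}) M"
proof -
  have "det_on I (\<lambda>r c. M c r) = M i i * det_on (I - {i}) (\<lambda>r c. M c r)"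
    by (rule det_on_single_row) (use assms in auto)
  moreover have "det_on I (\<lambda>r c. M c r) = det_on I M" by (rule det_on_transpose[OF assms(1)])
  moreover have "det_on (I - {i}) (\<lambda>r c. M c r) = det_on (I - {i}) M" by (rule det_on_transpose) (use assms in auto)
  ultimately show ?thesis by simp
qed

lemma det_on_empty: "det_on {} M = 1"
  unfolding det_on_def by simp

lemma det_on_diag:
  assumes "finite I" "\<And>r c. r \<in> I \<Longrightarrow> c \<in> I \<Longrightarrow> r \<noteq> c \<Longrightarrow> M r c = 0"
  shows "det_on I M = (\<Prod>i\<in>I. M i i)"
  using assms
proof (induction I rule: finite_induct)
  case empty
  then show ?case by (simp add: det_on_empty)
next
  case (insert x F)
  have "det_on (insert x F) M = M x x * det_on (insert x F - {x}) M"
    by (rule det_on_single_row) (use insert in auto)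
  also have "insert x F - {x} = F" using insert by auto
  finally show ?case using insert by simp
qed

lemma det_on_row_op:
  assumes "finite I" "a \<in> I" "b \<in> I" "a \<noteq> b"
  shows "det_on I (\<lambda>r c. if r = a then M a c + k * M b c else M r c) = det_on I M"
proof -
  have "det_on I (\<lambda>r c. if r = a then M a c + k * M b c else M r c)
      = k * det_on I (\<lambda>r c. if r = a then M b c else M r c) + det_on I M"
    by (rule det_on_row_lin[OF assms(1,2)]) auto
  moreover have "det_on I (\<lambda>r c. if r = a then M b c else M r c) = 0"
    by (rule det_on_equal_rows[OF assms(1,2,3,4)]) (use assms(4) in auto)
  ultimately show ?thesis by simp
qed

lemma det_on_col_op:
  assumes "finite I" "a \<in> I" "b \<in> I" "a \<noteq> b"
  shows "det_on I (\<lambda>r c. if c = a then M r a + k * M r b else M r c) = det_on I M"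
proof -
  have "det_on I (\<lambda>r c. if r = a then M c a + k * M c b else M c r) = det_on I (\<lambda>r c. M c r)"
    using det_on_row_op[OF assms, of "\<lambda>r c. M c r" k] by simp
  then show ?thesis
    using det_on_transpose[OF assms(1), of M] det_on_transpose[OF assms(1), of "\<lambda>r c. if c = a then M r a + k * M r b else M r c"]
    by simp
qed

lemma det_on_double:
  assumes "finite I" "a \<in> I" "b \<in> I" "a \<noteq> b"
    and "\<And>c. c \<in> I \<Longrightarrow> c \<noteq> b \<Longrightarrow> M a c = 0"
    and "\<And>r. r \<in> I \<Longrightarrow> r \<noteq> b \<Longrightarrow> M r a = 0"
  shows "det_on I M = - (M a b * M b a) * det_on (I - {a, b}) M"
proof -
  define \<tau> where "\<tau> = Transposition.transpose a b"
  define N where "N = (\<lambda>r c. M r (\<tau> c))"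
  have tp: "\<tau> permutes I" unfolding \<tau>_def by (rule permutes_swap_id[OF assms(2,3)])
  have 1: "det_on I N = - det_on I M"
    unfolding N_def using det_on_perm_cols[OF assms(1) tp, of M] assms(4)
    by (simp add: \<tau>_def sign_swap_id)
  have 2: "det_on I N = N a a * det_on (I - {a}) N"
    by (rule det_on_single_row[OF assms(1,2)])
       (use assms(2,4,5) in \<open>auto simp: N_def \<tau>_def Transposition.transpose_def\<close>)
  have 3: "det_on (I - {a}) N = N b b * det_on (I - {a} - {b}) N"
    by (rule det_on_single_col) (use assms in \<open>auto simp: N_def \<tau>_def Transposition.transpose_def\<close>)
  have 4: "det_on (I - {a} - {b}) N = det_on (I - {a, b}) M"
    unfolding Diff_insert2[symmetric] by (rule det_on_cong) (auto simp: N_def \<tau>_def Transposition.transpose_def)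
  have 5: "N a a = M a b" "N b b = M b a" by (auto simp: N_def \<tau>_def)
  have "det_on I M = - det_on I N" using 1 by simp
  also have "\<dots> = -(N a a * (N b b * det_on (I - {a, b}) M))" by (simp only: 2 3 4)
  finally show ?thesis by (simp only: 5 mult.assoc mult_minus_left)
qed

(* Merging index t into index s: row t is added to row s, column t to column s.
   For the graph matrix this is exactly the identification of two vertices. *)
definition contract_mat :: "('i \<Rightarrow> 'i \<Rightarrow> complex) \<Rightarrow> 'i \<Rightarrow> 'i \<Rightarrow> 'i \<Rightarrow> 'i \<Rightarrow> complex" where
  "contract_mat M s t r c =
     M r c + (if r = s then M t c else 0) + (if c = s then M r t else 0)
       + (if r = s \<and> c = s then M t t else 0)"

(* Abstract deletion-contraction: if row and column e vanish outside {e, s, t}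
   with opposite entries at s and t, then expanding along row e and eliminating
   t by the row/column operations "s += t" splits det M into a deletion and a
   contraction term. *)
lemma det_on_delete_contract:
  fixes M :: "'i \<Rightarrow> 'i \<Rightarrow> complex"
  assumes "finite I" "e \<in> I" "s \<in> I" "t \<in> I" "e \<noteq> s" "e \<noteq> t" "s \<noteq> t"
    and "M e s = x" "M e t = - x" "\<And>c. c \<in> I \<Longrightarrow> c \<notin> {e, s, t} \<Longrightarrow> M e c = 0"
    and "M s e = y" "M t e = - y" "\<And>r. r \<in> I \<Longrightarrow> r \<notin> {e, s, t} \<Longrightarrow> M r e = 0"
  shows "det_on I M = M e e * det_on (I - {e}) M - x * y * det_on (I - {e, t}) (contract_mat M s t)"
proof -
  define M1 where "M1 = (\<lambda>r c. if r = e then (if c = e then 1 else 0) else M r c)"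
  define M2 where "M2 = (\<lambda>r c. if r = e \<and> c = e then 0 else M r c)"
  have split_row: "det_on I M = M e e * det_on I M1 + det_on I M2"
    by (rule det_on_row_lin[OF assms(1,2)]) (auto simp: M1_def M2_def)
  have deletion: "det_on I M1 = det_on (I - {e}) M"
  proof -
    have "det_on I M1 = M1 e e * det_on (I - {e}) M1"
      by (rule det_on_single_row[OF assms(1,2)]) (auto simp: M1_def)
    also have "det_on (I - {e}) M1 = det_on (I - {e}) M"
      by (rule det_on_cong) (auto simp: M1_def)
    finally show ?thesis by (simp add: M1_def)
  qed
  define R where "R = (\<lambda>r c. if r = s then M2 s c + 1 * M2 t c else M2 r c)"
  define C where "C = (\<lambda>r c. if c = s then R r s + 1 * R r t else R r c)"
  have "det_on I C = det_on I M2"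
  proof -
    have "det_on I C = det_on I R"
      unfolding C_def by (rule det_on_col_op) (use assms in auto)
    also have "\<dots> = det_on I M2"
      unfolding R_def by (rule det_on_row_op) (use assms in auto)
    finally show ?thesis .
  qed
  moreover have "det_on I C = - (C e t * C t e) * det_on (I - {e, t}) C"
  proof (rule det_on_double[OF assms(1,2,4,6)])
    fix c assume "c \<in> I" "c \<noteq> t"
    then show "C e c = 0" using assms by (cases "c = s"; cases "c = e") (auto simp: C_def R_def M2_def)
  next
    fix r assume "r \<in> I" "r \<noteq> t"
    then show "C r e = 0" using assms by (cases "r = s"; cases "r = e") (auto simp: C_def R_def M2_def)
  qed
  moreover have "C e t = - x" "C t e = - y"
    using assms by (auto simp: C_def R_def M2_def)
  moreover have "det_on (I - {e, t}) C = det_on (I - {e, t}) (contract_mat M s t)"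
    by (rule det_on_cong) (use assms in \<open>auto simp: C_def R_def M2_def contract_mat_def\<close>)
  ultimately show ?thesis using split_row deletion by simp
qed

lemma det_on_reindex:
  assumes "finite I" "inj_on f I"
  shows "det_on (f ` I) N = det_on I (\<lambda>r c. N (f r) (f c))"
proof -
  let ?m = "map_permutation I f"
  let ?m' = "map_permutation (f ` I) (inv_into I f)"
  have bf: "bij_betw f I (f ` I)" using assms(2) by (simp add: bij_betw_def)
  have bg: "bij_betw (inv_into I f) (f ` I) I" using bij_betw_inv_into[OF bf] .
  have bij: "bij_betw ?m {p. p permutes I} {\<sigma>. \<sigma> permutes (f ` I)}"
  proof (rule bij_betw_byWitness[where f'="?m'"])
    show "\<forall>p\<in>{p. p permutes I}. ?m' (?m p) = p"
      using map_permutation_compose_inv[OF bf] assms(2) by (auto simp: inv_into_f_f)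
    show "\<forall>\<sigma>\<in>{\<sigma>. \<sigma> permutes (f ` I)}. ?m (?m' \<sigma>) = \<sigma>"
      using map_permutation_compose_inv[OF bg] by (auto simp: f_inv_into_f)
    show "?m ` {p. p permutes I} \<subseteq> {\<sigma>. \<sigma> permutes (f ` I)}"
      using map_permutation_permutes[OF bf] by auto
    show "?m' ` {\<sigma>. \<sigma> permutes (f ` I)} \<subseteq> {p. p permutes I}"
      using map_permutation_permutes[OF bg] by auto
  qed
  have "det_on (f ` I) N = (\<Sum>p\<in>{p. p permutes I}. of_int (sign (?m p)) * (\<Prod>r\<in>f ` I. N r (?m p r)))"
    unfolding det_on_def by (rule sum.reindex_bij_betw[OF bij, symmetric])
  also have "\<dots> = det_on I (\<lambda>r c. N (f r) (f c))"
    unfolding det_on_def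
  proof (intro sum.cong refl)
    fix p assume "p \<in> {p. p permutes I}"
    then have p: "p permutes I" by simp
    have "sign (?m p) = sign p" by (rule sign_map_permutation[OF assms(2) p assms(1)])
    moreover have "(\<Prod>r\<in>f ` I. N r (?m p r)) = (\<Prod>i\<in>I. N (f i) (f (p i)))"
      using assms(2) by (simp add: prod.reindex map_permutation_apply)
    ultimately show "of_int (sign (?m p)) * (\<Prod>r\<in>f ` I. N r (?m p r)) = of_int (sign p) * (\<Prod>i\<in>I. N (f i) (f (p i)))"
      by simp
  qed
  finally show ?thesis .
qed

definition bordered :: "('i \<Rightarrow> 'i \<Rightarrow> complex) \<Rightarrow> ('i \<Rightarrow> complex) \<Rightarrow> ('i \<Rightarrow> complex)
                        \<Rightarrow> 'i option \<Rightarrow> 'i option \<Rightarrow> complex" where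
  "bordered M b c x y = (case (x, y) of (Some r, Some s) \<Rightarrow> M r s | (Some r, None) \<Rightarrow> b r
      | (None, Some s) \<Rightarrow> c s | (None, None) \<Rightarrow> 0)"

lemma sum_mult_delta:
  assumes "finite S" "x \<in> S"
  shows "(\<Sum>j\<in>S. (f j :: complex) * (if x = j then 1 else 0)) = f x"
  using assms by (simp add: if_distrib[of "\<lambda>z. _ * z"] cong: if_cong)

(* The bilinear form of the adjugate is a bordered determinant: expand the border
   row and column; each term is, up to a column swap, an adjugate entry. *)
lemma det_on_bordered:
  assumes "finite I"
  shows "det_on (insert None (Some ` I)) (bordered M b c) = - (\<Sum>i\<in>I. \<Sum>j\<in>I. c i * b j * adj_on I M i j)"
proof -
  let ?J = "insert None (Some ` I)"
  have fJ: "finite ?J" using assms by simp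
  define N1 where "N1 = (\<lambda>j x y. if x = None then (if y = Some j then 1 else 0) else bordered M b c x y)"
  define N2 where "N2 = (\<lambda>j i x y. if y = None then (if x = Some i then 1 else 0) else N1 j x y)"
  have expand_row: "det_on ?J (bordered M b c) = (\<Sum>j\<in>I. c j * det_on ?J (N1 j))"
    by (rule det_on_row_sum[OF fJ _ assms]) (auto simp: N1_def bordered_def assms sum_mult_delta split: option.splits)
  have expand_col: "det_on ?J (N1 j) = (\<Sum>i\<in>I. b i * det_on ?J (N2 j i))" for j
  proof -
    have "det_on ?J (\<lambda>x y. N1 j y x) = (\<Sum>i\<in>I. b i * det_on ?J (\<lambda>x y. N2 j i y x))"
      by (rule det_on_row_sum[OF fJ _ assms]) (auto simp: N1_def N2_def bordered_def assms sum_mult_delta split: option.splits)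
    then show ?thesis by (simp only: det_on_transpose[OF fJ, of "N1 j"] det_on_transpose[OF fJ, of "N2 j _"])
  qed
  have unit_border: "det_on ?J (N2 j i) = - adj_on I M j i" if "j \<in> I" "i \<in> I" for i j
  proof -
    define \<tau> where "\<tau> = Transposition.transpose None (Some j)"
    have tp: "\<tau> permutes ?J" unfolding \<tau>_def by (rule permutes_swap_id) (use that in auto)
    define P where "P = (\<lambda>x y. N2 j i x (\<tau> y))"
    have "det_on ?J P = - det_on ?J (N2 j i)"
      unfolding P_def using det_on_perm_cols[OF fJ tp, of "N2 j i"]
      by (simp add: \<tau>_def sign_swap_id)
    moreover have "det_on ?J P = P None None * det_on (?J - {None}) P"
      by (rule det_on_single_row[OF fJ]) (auto simp: P_def N2_def N1_def \<tau>_def Transposition.transpose_def)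
    moreover have "P None None = 1" by (simp add: P_def N2_def N1_def \<tau>_def)
    moreover have "?J - {None} = Some ` I" by auto
    moreover have "det_on (Some ` I) P = det_on I (\<lambda>r c. P (Some r) (Some c))"
      by (rule det_on_reindex[OF assms]) simp
    moreover have "(\<lambda>r c. P (Some r) (Some c)) = (\<lambda>r c. if c = j then (if r = i then 1 else 0) else M r c)"
      by (auto simp: fun_eq_iff P_def N2_def N1_def \<tau>_def Transposition.transpose_def bordered_def)
    ultimately show ?thesis by (simp add: adj_on_def)
  qed
  have "det_on ?J (bordered M b c) = (\<Sum>j\<in>I. c j * (\<Sum>i\<in>I. b i * (- adj_on I M j i)))"
    using expand_row expand_col unit_border by simp
  also have "\<dots> = - (\<Sum>i\<in>I. \<Sum>j\<in>I. c i * b j * adj_on I M i j)"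
    by (simp add: sum_distrib_left sum_negf algebra_simps)
  finally show ?thesis .
qed

lemma bordered_contract_mat:
  "contract_mat (bordered M b c) (Some s) (Some t)
     = bordered (contract_mat M s t) (b(s := b s + b t)) (c(s := c s + c t))"
proof (intro ext)
  fix x y
  show "contract_mat (bordered M b c) (Some s) (Some t) x y
      = bordered (contract_mat M s t) (b(s := b s + b t)) (c(s := c s + c t)) x y"
    by (cases x; cases y) (simp_all add: contract_mat_def bordered_def)
qed

lemma bordered_cong:
  assumes "\<And>r c. r \<in> I \<Longrightarrow> c \<in> I \<Longrightarrow> M r c = N r c"
  shows "det_on (insert None (Some ` I)) (bordered M b c) = det_on (insert None (Some ` I)) (bordered N b c)"
  by (rule det_on_cong) (use assms in \<open>auto simp: bordered_def split: option.splits\<close>)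

lemma adj_on_diag:
  assumes "finite I" "i \<in> I" "j \<in> I" "\<And>r c. r \<in> I \<Longrightarrow> c \<in> I \<Longrightarrow> r \<noteq> c \<Longrightarrow> M r c = 0"
  shows "adj_on I M i j = (if i = j then (\<Prod>k\<in>I - {i}. M k k) else 0)"
proof -
  let ?A = "\<lambda>r c. if c = i then (if r = j then 1 else 0) else M r c"
  show ?thesis
  proof (cases "i = j")
    case True
    have "det_on I ?A = (\<Prod>k\<in>I. ?A k k)" by (rule det_on_diag[OF assms(1)]) (use assms True in auto)
    also have "\<dots> = ?A i i * (\<Prod>k\<in>I - {i}. ?A k k)" by (rule prod.remove[OF assms(1,2)])
    also have "(\<Prod>k\<in>I - {i}. ?A k k) = (\<Prod>k\<in>I - {i}. M k k)" by (intro prod.cong) auto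
    finally show ?thesis using True by (simp add: adj_on_def)
  next
    case False
    have "det_on I ?A = ?A i i * det_on (I - {i}) ?A"
      by (rule det_on_single_row[OF assms(1,2)]) (use assms in auto)
    then show ?thesis using False by (simp add: adj_on_def)
  qed
qed

lemma sum_Inl_Inr:
  assumes "finite E" "finite V"
  shows "(\<Sum>i\<in>Inl ` E \<union> Inr ` V. f i) = (\<Sum>e\<in>E. f (Inl e)) + (\<Sum>v\<in>V. f (Inr v))"
  using assms by (subst sum.union_disjoint) (auto simp: sum.reindex)

lemma prod_Inl_Inr:
  assumes "finite E" "finite V"
  shows "(\<Prod>i\<in>Inl ` E \<union> Inr ` V. f i) = (\<Prod>e\<in>E. f (Inl e)) * (\<Prod>v\<in>V. f (Inr v))"
  using assms by (subst prod.union_disjoint) (auto simp: prod.reindex)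

(* Q_G is symmetric, so the column of an edge is determined by its row. *)
lemma QG_sym: "QG src tgt \<alpha> q x y = QG src tgt \<alpha> q y x"
  by (auto simp: QG_def split: sum.splits)

lemma QG_edge_row:
  assumes "src e \<noteq> tgt e"
  shows "QG src tgt \<alpha> q (Inl e) c =
           (if c = Inl e then complex_of_real (\<alpha> e) else if c = Inr (src e) then - \<i>
            else if c = Inr (tgt e) then \<i> else 0)"
  using assms by (auto simp: QG_def incid_def split: sum.splits)

(* Merging the endpoint rows/columns of e in Q_G gives Q_{G/e}, away from the
   deleted indices e and tgt e.  This is where q_{v12} = q_{v1} + q_{v2} enters. *)
lemma QG_contract:
  assumes "src e \<noteq> tgt e"
    and "r \<in> Inl ` (E - {e}) \<union> Inr ` (V - {tgt e})" "c \<in> Inl ` (E - {e}) \<union> Inr ` (V - {tgt e})"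
  shows "contract_mat (QG src tgt \<alpha> q) (Inr (src e)) (Inr (tgt e)) r c
       = QG (contr_src src tgt e) (contr_tgt src tgt e) \<alpha> (contr_q q src tgt e) r c"
  using assms
  by (cases r; cases c)
     (auto simp: contract_mat_def QG_def incid_def merge_def contr_src_def contr_tgt_def contr_q_def)

definition momentum_coord :: "('v \<Rightarrow> real^'d) \<Rightarrow> 'd \<Rightarrow> ('e + 'v) \<Rightarrow> complex" where
  "momentum_coord p k x = (case x of Inl _ \<Rightarrow> 0 | Inr v \<Rightarrow> complex_of_real (p v $ k))"

lemma momentum_coord_contract:
  "(momentum_coord (contr_p p src tgt e) k :: 'e + 'v \<Rightarrow> complex)
     = (momentum_coord p k)(Inr (src e) := momentum_coord p k (Inr (src e)) + momentum_coord p k (Inr (tgt e)))"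
  by (auto simp: fun_eq_iff momentum_coord_def contr_p_def split: sum.splits)

(* V_G as a sum over coordinates of bordered determinants (by det_on_bordered),
   which puts V_G in reach of the determinant identities. *)
lemma VG_bordered:
  fixes E :: "'e set" and V :: "'v set" and p :: "'v \<Rightarrow> real^'d"
  assumes "finite E" "finite V"
  shows "VG E V src tgt \<alpha> q p = - (\<Sum>k\<in>UNIV. det_on (insert None (Some ` (Inl ` E \<union> Inr ` V)))
            (bordered (QG src tgt \<alpha> q) (momentum_coord p k) (momentum_coord p k)))"
proof -
  let ?I = "Inl ` E \<union> Inr ` V"
  let ?A = "adj_on ?I (QG src tgt \<alpha> q)"
  let ?x = "\<lambda>k. momentum_coord p k :: 'e + 'v \<Rightarrow> complex"
  have "- (\<Sum>k\<in>UNIV. det_on (insert None (Some ` ?I)) (bordered (QG src tgt \<alpha> q) (?x k) (?x k)))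
      = (\<Sum>k\<in>UNIV. \<Sum>i\<in>?I. \<Sum>j\<in>?I. ?x k i * ?x k j * ?A i j)"
    using assms by (simp add: det_on_bordered sum_negf)
  also have "\<dots> = (\<Sum>k\<in>UNIV. \<Sum>v\<in>V. \<Sum>v'\<in>V. ?x k (Inr v) * ?x k (Inr v') * ?A (Inr v) (Inr v'))"
    using assms by (simp add: sum_Inl_Inr momentum_coord_def)
  also have "\<dots> = (\<Sum>v\<in>V. \<Sum>v'\<in>V. \<Sum>k\<in>UNIV. ?x k (Inr v) * ?x k (Inr v') * ?A (Inr v) (Inr v'))"
    by (subst sum.swap) (rule sum.cong[OF refl], rule sum.swap)
  also have "\<dots> = (\<Sum>v\<in>V. \<Sum>v'\<in>V. complex_of_real (inner (p v) (p v')) * ?A (Inr v) (Inr v'))"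
    by (intro sum.cong refl) (simp add: momentum_coord_def inner_vec_def sum_distrib_right)
  finally show ?thesis unfolding VG_def by simp
qed

(* Deletion-contraction for U_G: expand det Q_G along the row of the edge e. *)
lemma UG_delete_contract:
  assumes "finite E" "finite V" "e \<in> E" "src e \<in> V" "tgt e \<in> V" "src e \<noteq> tgt e"
  shows "UG E V src tgt \<alpha> q
       = complex_of_real (\<alpha> e) * UG (E - {e}) V src tgt \<alpha> q
         + UG (E - {e}) (contr_V V src tgt e) (contr_src src tgt e) (contr_tgt src tgt e)
              \<alpha> (contr_q q src tgt e)"
proof -
  let ?I = "Inl ` E \<union> Inr ` V"
  let ?Q = "QG src tgt \<alpha> q"
  let ?C = "Inl ` (E - {e}) \<union> Inr ` (V - {tgt e})"
  have "det_on ?I ?Q = ?Q (Inl e) (Inl e) * det_on (?I - {Inl e}) ?Q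
          - (- \<i>) * (- \<i>) * det_on (?I - {Inl e, Inr (tgt e)}) (contract_mat ?Q (Inr (src e)) (Inr (tgt e)))"
    by (rule det_on_delete_contract)
       (use assms in \<open>auto simp: QG_edge_row QG_sym[of _ _ _ _ _ "Inl e"]\<close>)
  moreover have "?I - {Inl e} = Inl ` (E - {e}) \<union> Inr ` V" "?I - {Inl e, Inr (tgt e)} = ?C"
    by auto
  moreover have "det_on ?C (contract_mat ?Q (Inr (src e)) (Inr (tgt e)))
      = det_on ?C (QG (contr_src src tgt e) (contr_tgt src tgt e) \<alpha> (contr_q q src tgt e))"
    by (rule det_on_cong) (rule QG_contract[where src=src and tgt=tgt and e=e, OF assms(6)])
  ultimately show ?thesis using assms(6) by (simp add: UG_def contr_V_def QG_edge_row)
qed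

(* Deletion-contraction for V_G: the same expansion, applied to each bordered
   determinant; merging commutes with the border, which adds up the momenta. *)
lemma VG_delete_contract:
  fixes p :: "'v \<Rightarrow> real^'d"
  assumes "finite E" "finite V" "e \<in> E" "src e \<in> V" "tgt e \<in> V" "src e \<noteq> tgt e"
  shows "VG E V src tgt \<alpha> q p
       = complex_of_real (\<alpha> e) * VG (E - {e}) V src tgt \<alpha> q p
         + VG (E - {e}) (contr_V V src tgt e) (contr_src src tgt e) (contr_tgt src tgt e)
              \<alpha> (contr_q q src tgt e) (contr_p p src tgt e)"
proof -
  let ?I = "Inl ` E \<union> Inr ` V"
  let ?Q = "QG src tgt \<alpha> q"
  let ?Q' = "QG (contr_src src tgt e) (contr_tgt src tgt e) \<alpha> (contr_q q src tgt e)"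
  let ?C = "Inl ` (E - {e}) \<union> Inr ` (V - {tgt e})"
  let ?J = "insert None (Some ` ?I)"
  let ?B = "\<lambda>k. bordered ?Q (momentum_coord p k) (momentum_coord p k)"
  let ?B' = "\<lambda>k. bordered ?Q' (momentum_coord (contr_p p src tgt e) k) (momentum_coord (contr_p p src tgt e) k)"
  have expand: "det_on ?J (?B k) = ?B k (Some (Inl e)) (Some (Inl e)) * det_on (?J - {Some (Inl e)}) (?B k)
          - (- \<i>) * (- \<i>) * det_on (?J - {Some (Inl e), Some (Inr (tgt e))})
              (contract_mat (?B k) (Some (Inr (src e))) (Some (Inr (tgt e))))" for k
    by (rule det_on_delete_contract)
       (use assms in \<open>auto simp: bordered_def momentum_coord_def QG_edge_row
                                 QG_sym[of _ _ _ _ _ "Inl e"] split: option.splits\<close>)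
  have deletion: "?J - {Some (Inl e)} = insert None (Some ` (Inl ` (E - {e}) \<union> Inr ` V))"
    by auto
  have contraction: "det_on (?J - {Some (Inl e), Some (Inr (tgt e))})
        (contract_mat (?B k) (Some (Inr (src e))) (Some (Inr (tgt e)))) = det_on (insert None (Some ` ?C)) (?B' k)" for k
  proof -
    have "?J - {Some (Inl e), Some (Inr (tgt e))} = insert None (Some ` ?C)" by auto
    then show ?thesis
      unfolding bordered_contract_mat
      by (subst (1 2) momentum_coord_contract)
         (simp only: bordered_cong[OF QG_contract[where src=src and tgt=tgt and e=e, OF assms(6)]])
  qed
  have fin: "finite (E - {e})" "finite (V - {tgt e})" using assms(1,2) by auto
  show ?thesis
    unfolding VG_bordered[OF assms(1,2)] VG_bordered[OF fin(1) assms(2)] contr_V_def VG_bordered[OF fin]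
    using expand deletion contraction assms(6)
    by (simp add: bordered_def QG_edge_row sum.distrib sum_distrib_left sum_negf algebra_simps)
qed

lemma QG_all_loops_diagonal:
  assumes "\<forall>e\<in>E. src e = tgt e" "r \<in> Inl ` E \<union> Inr ` V" "c \<in> Inl ` E \<union> Inr ` V" "r \<noteq> c"
  shows "QG src tgt \<alpha> q r c = 0"
  using assms by (auto simp: QG_def incid_def split: if_splits)

lemma prod_QG_diagonal:
  assumes "finite E" "finite V"
  shows "(\<Prod>i\<in>Inl ` E \<union> Inr ` V. QG src tgt \<alpha> q i i) = complex_of_real ((\<Prod>e\<in>E. \<alpha> e) * (\<Prod>v\<in>V. q v))"
  using assms by (simp add: prod_Inl_Inr QG_def)

lemma UG_all_loops:
  assumes "finite E" "finite V" "\<forall>e\<in>E. src e = tgt e"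
  shows "UG E V src tgt \<alpha> q = complex_of_real ((\<Prod>e\<in>E. \<alpha> e) * (\<Prod>v\<in>V. q v))"
proof -
  have "UG E V src tgt \<alpha> q = (\<Prod>i\<in>Inl ` E \<union> Inr ` V. QG src tgt \<alpha> q i i)"
    unfolding UG_def using assms by (intro det_on_diag QG_all_loops_diagonal) auto
  then show ?thesis using prod_QG_diagonal[OF assms(1,2)] by simp
qed

lemma VG_all_loops:
  fixes p :: "'v \<Rightarrow> real^'d"
  assumes "finite E" "finite V" "\<forall>e\<in>E. src e = tgt e"
  shows "VG E V src tgt \<alpha> q p
       = complex_of_real ((\<Prod>e\<in>E. \<alpha> e) * (\<Sum>v\<in>V. inner (p v) (p v) * (\<Prod>v'\<in>V - {v}. q v')))"
proof -
  let ?I = "Inl ` E \<union> Inr ` V"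
  have adj: "adj_on ?I (QG src tgt \<alpha> q) (Inr v) (Inr v')
      = (if v = v' then complex_of_real ((\<Prod>e\<in>E. \<alpha> e) * (\<Prod>u\<in>V - {v}. q u)) else 0)"
    if "v \<in> V" "v' \<in> V" for v v'
  proof -
    have set: "?I - {Inr v} = Inl ` E \<union> Inr ` (V - {v})" by auto
    have "adj_on ?I (QG src tgt \<alpha> q) (Inr v) (Inr v')
        = (if v = v' then (\<Prod>k\<in>?I - {Inr v}. QG src tgt \<alpha> q k k) else 0)"
      by (subst adj_on_diag) (use assms that in \<open>auto intro: QG_all_loops_diagonal\<close>)
    also have "\<dots> = (if v = v' then complex_of_real ((\<Prod>e\<in>E. \<alpha> e) * (\<Prod>u\<in>V - {v}. q u)) else 0)"
      using assms(1,2) by (simp only: set prod_QG_diagonal finite_Diff)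
    finally show ?thesis .
  qed
  have "VG E V src tgt \<alpha> q p
      = (\<Sum>v\<in>V. complex_of_real (inner (p v) (p v)) * complex_of_real ((\<Prod>e\<in>E. \<alpha> e) * (\<Prod>u\<in>V - {v}. q u)))"
    unfolding VG_def using assms(2) by (intro sum.cong refl) (simp add: adj if_distrib cong: if_cong)
  then show ?thesis by (simp add: sum_distrib_left algebra_simps)
qed

theorem theorem3p3:
  fixes E :: "'e set" and V :: "'v set" and src tgt :: "'e \<Rightarrow> 'v"
    and \<alpha> :: "'e \<Rightarrow> real" and q :: "'v \<Rightarrow> real" and p :: "'v \<Rightarrow> real^'d"
  assumes "finite E" and "finite V"
    and "\<forall>e\<in>E. src e \<in> V \<and> tgt e \<in> V"
  shows "(\<forall>e\<in>E. src e \<noteq> tgt e \<longrightarrow>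
            UG E V src tgt \<alpha> q
              = complex_of_real (\<alpha> e) * UG (E - {e}) V src tgt \<alpha> q
                + UG (E - {e}) (contr_V V src tgt e) (contr_src src tgt e) (contr_tgt src tgt e)
                     \<alpha> (contr_q q src tgt e)
          \<and> VG E V src tgt \<alpha> q p
              = complex_of_real (\<alpha> e) * VG (E - {e}) V src tgt \<alpha> q p
                + VG (E - {e}) (contr_V V src tgt e) (contr_src src tgt e) (contr_tgt src tgt e)
                     \<alpha> (contr_q q src tgt e) (contr_p p src tgt e))
       \<and> ((\<forall>e\<in>E. src e = tgt e) \<longrightarrow>
            UG E V src tgt \<alpha> q = complex_of_real ((\<Prod>e\<in>E. \<alpha> e) * (\<Prod>v\<in>V. q v))
          \<and> VG E V src tgt \<alpha> q p
              = complex_of_real ((\<Prod>e\<in>E. \<alpha> e)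
                   * (\<Sum>v\<in>V. inner (p v) (p v) * (\<Prod>v'\<in>V - {v}. q v'))))"
  using assms
  by (intro conjI ballI impI UG_delete_contract VG_delete_contract UG_all_loops VG_all_loops) auto

end
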